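(* Let $\mathbf B_n$ be the $n$-th Bell number. Then $\lim_{n\to\infty}\mathbf B_n/\alpha_n(12\text{-}34)=0$.
   Context: A permutation $\pi=\pi_1\cdots\pi_n$ of $\{1,\dots,n\}$ contains the generalized pattern $12\text{-}34$ if there are indices $i<j$ with $i+1<j$ such that $\pi_i<\pi_{i+1}<\pi_j<\pi_{j+1}$; otherwise it avoids it. $\alpha_n(12\text{-}34)$ is the number of permutations of $\{1,\dots,n\}$ avoiding $12\text{-}34$. The Bell number $\mathbf B_n$ is the number of set partitions of an $n$-element set. *)

theory Defs
  imports Complex_Main "HOL-Library.Disjoint_Sets"
begin

definition bell :: "nat \<Rightarrow> nat" where
  "bell n = card {P. partition_on {1..n} P}"

text \<open>Permutations of {1..n} in one-line notation, as lists (0-indexed positions).\<close>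
definition perms :: "nat \<Rightarrow> nat list set" where
  "perms n = {p. distinct p \<and> set p = {1..n}}"

definition contains_12_34 :: "nat list \<Rightarrow> bool" where
  "contains_12_34 p \<longleftrightarrow> (\<exists>i j. i + 1 < j \<and> j + 1 < length p \<and>
      p ! i < p ! (i + 1) \<and> p ! (i + 1) < p ! j \<and> p ! j < p ! (j + 1))"

definition alpha_12_34 :: "nat \<Rightarrow> nat" where
  "alpha_12_34 n = card {p \<in> perms n. \<not> contains_12_34 p}"

end

theory Submission
  imports Defs "HOL-Combinatorics.Multiset_Permutations"
begin

(* Splitting off the block that contains the largest element gives
   B(n+1) <= sum_k C(n,k) B(n-k), and every nonnegative sequence obeying this recurrence
   is O(n!/c^n) for each c > 0, since sum_k c^k/k! <= e^c is eventually below (n+1)/c.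
   Conversely, interleaving any arrangement of the small values 1..ceil(n/2) (at even
   positions) with any arrangement of the large ones (at odd positions) avoids 12-34:
   every ascent climbs from a small to a large value, so the top of one ascent exceeds
   the bottom of any later ascent. Hence alpha_n >= ceil(n/2)! floor(n/2)! >= n!/2^n,
   and with c = 4 the ratio B_n/alpha_n is O(2^-n). *)

lemma partition_on_split_block:
  assumes P: "partition_on A P" and a: "a \<in> A"
  obtains S Q where "S \<subseteq> A - {a}" "partition_on (A - {a} - S) Q" "P = insert (insert a S) Q"
proof -
  obtain B where B: "B \<in> P" "a \<in> B" using P a partition_onD1 by blast
  have "disjnt B (\<Union>(P - {B}))"
    using P B unfolding partition_on_def disjoint_def disjnt_def by blast
  moreover have P_eq: "P = insert B (P - {B})" using B by blast
  ultimately have "partition_on (A - B) (P - {B})" "B \<subseteq> A"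
    using P partition_on_insert by metis+
  moreover have "A - B = A - {a} - (B - {a})" and "insert a (B - {a}) = B" using B by blast+
  ultimately show thesis using P_eq by (intro that[of "B - {a}" "P - {B}"]) auto
qed

lemma card_partition_on_le_sum:
  assumes "finite A" "a \<in> A"
  shows "card {P. partition_on A P}
           \<le> (\<Sum>S\<in>Pow (A - {a}). card {Q. partition_on (A - {a} - S) Q})"
proof -
  let ?\<Sigma> = "SIGMA S:Pow (A - {a}). {Q. partition_on (A - {a} - S) Q}"
  have fin: "finite ?\<Sigma>"
    using assms by (auto intro!: finite_SigmaI finitely_many_partition_on)
  have "{P. partition_on A P} \<subseteq> (\<lambda>(S, Q). insert (insert a S) Q) ` ?\<Sigma>"
  proof
    fix P assume "P \<in> {P. partition_on A P}"
    then obtain S Q where "S \<subseteq> A - {a}" "partition_on (A - {a} - S) Q" "P = insert (insert a S) Q"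
      using partition_on_split_block[OF _ assms(2)] by blast
    then show "P \<in> (\<lambda>(S, Q). insert (insert a S) Q) ` ?\<Sigma>"
      by (intro image_eqI[where x = "(S, Q)"]) auto
  qed
  then have "card {P. partition_on A P} \<le> card ((\<lambda>(S, Q). insert (insert a S) Q) ` ?\<Sigma>)"
    using fin by (intro card_mono) auto
  also have "\<dots> \<le> card ?\<Sigma>"
    using fin by (rule card_image_le)
  also have "\<dots> = (\<Sum>S\<in>Pow (A - {a}). card {Q. partition_on (A - {a} - S) Q})"
    using assms by (simp add: finitely_many_partition_on)
  finally show ?thesis .
qed

lemma card_partition_on_le_inj_image:
  assumes "finite A" "inj_on f A"
  shows "card {P. partition_on A P} \<le> card {P. partition_on (f ` A) P}"
proof (rule card_inj_on_le)
  have "inj_on ((`) ((`) f)) (Pow (Pow A))"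
    using assms(2) by (intro inj_on_image_Pow)
  then show "inj_on ((`) ((`) f)) {P. partition_on A P}"
    by (rule inj_on_subset) (auto simp: partition_on_def)
  show "(`) ((`) f) ` {P. partition_on A P} \<subseteq> {P. partition_on (f ` A) P}"
  proof clarify
    fix P assume P: "partition_on A P"
    then have "(`) f ` P - {{}} = (`) f ` P"
      using partition_onD3 by fastforce
    then show "partition_on (f ` A) ((`) f ` P)"
      using partition_on_inj_image[OF P assms(2)] by simp
  qed
  show "finite {P. partition_on (f ` A) P}"
    using assms(1) by (simp add: finitely_many_partition_on)
qed

lemma card_partition_on_bij_betw:
  assumes "finite A" "bij_betw f A B"
  shows "card {P. partition_on A P} = card {P. partition_on B P}"
proof (rule antisym)
  show "card {P. partition_on A P} \<le> card {P. partition_on B P}"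
    using assms card_partition_on_le_inj_image[of A f] by (simp add: bij_betw_def)
  have "bij_betw (inv_into A f) B A" "finite B"
    using assms by (auto simp: bij_betw_inv_into bij_betw_finite)
  then show "card {P. partition_on B P} \<le> card {P. partition_on A P}"
    using card_partition_on_le_inj_image[of B "inv_into A f"] by (simp add: bij_betw_def)
qed

lemma card_partition_on_eq_bell:
  assumes "finite A"
  shows "card {P. partition_on A P} = bell (card A)"
proof -
  obtain h where "bij_betw h {1..card A} A"
    using ex_bij_betw_nat_finite_1[OF assms] by blast
  then show ?thesis
    unfolding bell_def by (simp add: card_partition_on_bij_betw)
qed

lemma sum_Pow_card:
  fixes h :: "nat \<Rightarrow> 'a::comm_semiring_1"
  assumes "finite A"
  shows "(\<Sum>S\<in>Pow A. h (card S)) = (\<Sum>k\<le>card A. of_nat (card A choose k) * h k)"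
proof -
  have "(\<Sum>S\<in>Pow A. h (card S)) = (\<Sum>k\<le>card A. \<Sum>S\<in>{S \<in> Pow A. card S = k}. h (card S))"
    using assms by (intro sum.group[symmetric]) (auto intro: card_mono)
  also have "\<dots> = (\<Sum>k\<le>card A. \<Sum>S\<in>{S. S \<subseteq> A \<and> card S = k}. h k)"
    by (intro sum.cong) auto
  also have "\<dots> = (\<Sum>k\<le>card A. of_nat (card A choose k) * h k)"
    using n_subsets[OF assms] by simp
  finally show ?thesis .
qed

lemma bell_Suc_le: "bell (Suc n) \<le> (\<Sum>k\<le>n. (n choose k) * bell (n - k))"
proof -
  have "bell (Suc n) = card {P. partition_on {1..Suc n} P}"
    by (simp add: bell_def)
  also have "\<dots> \<le> (\<Sum>S\<in>Pow {1..n}. card {Q. partition_on ({1..n} - S) Q})"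
    using card_partition_on_le_sum[of "{1..Suc n}" "Suc n"] by (simp add: atLeastAtMostSuc_conv)
  also have "\<dots> = (\<Sum>S\<in>Pow {1..n}. bell (n - card S))"
    by (intro sum.cong) (auto simp: card_partition_on_eq_bell card_Diff_subset finite_subset)
  also have "\<dots> = (\<Sum>k\<le>n. (n choose k) * bell (n - k))"
    using sum_Pow_card[of "{1..n}" "\<lambda>k. bell (n - k)"] by simp
  finally show ?thesis .
qed

lemma sum_power_div_fact_le_exp:
  fixes x :: real
  assumes "0 \<le> x"
  shows "(\<Sum>k\<le>n. x ^ k / fact k) \<le> exp x"
proof -
  have "(\<Sum>k\<le>n. x ^ k / fact k) = (\<Sum>k\<in>{..n}. inverse (fact k) * x ^ k)"
    by (simp add: field_simps)
  also have "\<dots> \<le> (\<Sum>k. inverse (fact k) * x ^ k)"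
    using assms by (intro sum_le_suminf summable_exp) auto
  finally show ?thesis
    by (simp add: exp_def)
qed

lemma Bell_recurrence_imp_le_fact_div_power:
  fixes a :: "nat \<Rightarrow> real" and c :: real
  assumes c: "0 < c" and nonneg: "\<And>n. 0 \<le> a n"
    and rec: "\<And>n. a (Suc n) \<le> (\<Sum>k\<le>n. (n choose k) * a (n - k))"
  obtains K where "0 \<le> K" "\<And>n. a n \<le> K * fact n / c ^ n"
proof -
  obtain N :: nat where N: "c * exp c \<le> N"
    using real_arch_simple by blast
  define K where "K = Max ((\<lambda>n. a n * c ^ n / fact n) ` {..N})"
  have initial: "a n \<le> K * fact n / c ^ n" if "n \<le> N" for n
  proof -
    have "a n * c ^ n / fact n \<le> K"
      unfolding K_def using that by (intro Max_ge) auto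
    then show ?thesis
      using c by (simp add: field_simps)
  qed
  have "0 \<le> K"
    using initial[of 0] nonneg[of 0] by simp
  have "a n \<le> K * fact n / c ^ n" for n
  proof (induction n rule: less_induct)
    case (less n)
    show ?case
    proof (cases "n \<le> N")
      case True
      then show ?thesis by (rule initial)
    next
      case False
      then obtain m where n: "n = Suc m" and "N \<le> m"
        by (cases n) auto
      have "a n \<le> (\<Sum>k\<le>m. (m choose k) * a (m - k))"
        unfolding n by (rule rec)
      also have "\<dots> \<le> (\<Sum>k\<le>m. (m choose k) * (K * fact (m - k) / c ^ (m - k)))"
        using less n by (intro sum_mono mult_left_mono) auto
      also have "\<dots> = K * fact m / c ^ m * (\<Sum>k\<le>m. c ^ k / fact k)"
        unfolding sum_distrib_left
      proof (intro sum.cong refl)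
        fix k assume "k \<in> {..m}"
        then have "real (m choose k) = fact m / (fact k * fact (m - k))"
          and "c ^ m = c ^ k * c ^ (m - k)"
          by (simp_all add: binomial_fact flip: power_add)
        then show "(m choose k) * (K * fact (m - k) / c ^ (m - k))
                     = K * fact m / c ^ m * (c ^ k / fact k)"
          using c by (simp add: field_simps)
      qed
      also have "\<dots> \<le> K * fact m / c ^ m * exp c"
        using c \<open>0 \<le> K\<close> by (intro mult_left_mono sum_power_div_fact_le_exp) auto
      also have "\<dots> \<le> K * fact m / c ^ m * ((m + 1) / c)"
        using c \<open>0 \<le> K\<close> N \<open>N \<le> m\<close> by (intro mult_left_mono) (auto simp: field_simps)
      also have "\<dots> = K * fact n / c ^ n"
        unfolding n using c by (simp add: field_simps)
      finally show ?thesis .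
    qed
  qed
  with \<open>0 \<le> K\<close> show thesis by (rule that)
qed

lemma set_splice [simp]: "set (splice xs ys) = set xs \<union> set ys"
  by (induction xs ys rule: splice.induct) auto

lemma distinct_splice_iff:
  "distinct (splice xs ys) \<longleftrightarrow> distinct xs \<and> distinct ys \<and> set xs \<inter> set ys = {}"
  by (induction xs ys rule: splice.induct) auto

lemma nth_splice:
  assumes "length ys \<le> length xs" "length xs \<le> Suc (length ys)" "i < length xs + length ys"
  shows "splice xs ys ! i = (if even i then xs ! (i div 2) else ys ! (i div 2))"
  using assms
proof (induction xs ys arbitrary: i rule: splice.induct)
  case (2 x xs ys)
  then show ?case
    by (cases i) (auto elim!: oddE)
qed simp

lemma splice_eq_splice_iff:
  assumes "length xs = length xs'" "length ys = length ys'"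
  shows "splice xs ys = splice xs' ys' \<longleftrightarrow> xs = xs' \<and> ys = ys'"
  using assms
proof (induction xs ys arbitrary: xs' ys' rule: splice.induct)
  case (2 x xs ys)
  then show ?case
    by (cases xs') auto
qed simp

lemma not_contains_12_34_if_alternating:
  assumes alt: "\<And>i. i < length p \<Longrightarrow> p ! i \<le> c \<longleftrightarrow> even i"
  shows "\<not> contains_12_34 p"
proof
  have ascent: "p ! k \<le> c \<and> c < p ! (k + 1)" if "k + 1 < length p" "p ! k < p ! (k + 1)" for k
    using alt[of k] alt[of "k + 1"] that by auto
  assume "contains_12_34 p"
  then obtain i j where "i + 1 < j" "j + 1 < length p" "p ! i < p ! (i + 1)"
      "p ! (i + 1) < p ! j" "p ! j < p ! (j + 1)"
    unfolding contains_12_34_def by blast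
  with ascent[of i] ascent[of j] show False
    by auto
qed

lemma perms_eq_permutations_of_set: "perms n = permutations_of_set {1..n}"
  unfolding perms_def permutations_of_set_def by auto

lemma fact_mult_fact_le_alpha_12_34: "fact ((n + 1) div 2) * fact (n div 2) \<le> alpha_12_34 n"
proof -
  define c where "c = (n + 1) div 2"
  have n_c: "c \<le> n" "n - c = n div 2" "n div 2 \<le> c" "c \<le> Suc (n div 2)"
    unfolding c_def by auto
  define X where "X = permutations_of_set {1..c} \<times> permutations_of_set {c+1..n}"
  have lengths: "length xs = c" "length ys = n div 2" if "(xs, ys) \<in> X" for xs ys
    using that n_c unfolding X_def by (auto dest: length_finite_permutations_of_set)
  have "inj_on (\<lambda>(xs, ys). splice xs ys) X"
  proof (rule inj_onI, clarify)
    fix xs ys xs' ys' assume "(xs, ys) \<in> X" "(xs', ys') \<in> X" "splice xs ys = splice xs' ys'"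
    with lengths show "xs = xs' \<and> ys = ys'"
      by (metis splice_eq_splice_iff)
  qed
  then have "card X = card ((\<lambda>(xs, ys). splice xs ys) ` X)"
    by (simp add: card_image)
  also have "\<dots> \<le> alpha_12_34 n"
    unfolding alpha_12_34_def
  proof (intro card_mono subsetI)
    show "finite {p \<in> perms n. \<not> contains_12_34 p}"
      by (simp add: perms_eq_permutations_of_set)
    fix p assume "p \<in> (\<lambda>(xs, ys). splice xs ys) ` X"
    then obtain xs ys where p: "p = splice xs ys" and xy: "(xs, ys) \<in> X"
      by auto
    have xs: "set xs = {1..c}" "distinct xs" and ys: "set ys = {c+1..n}" "distinct ys"
      using xy unfolding X_def permutations_of_set_def by auto
    have "p \<in> perms n"
      unfolding p perms_def using xs ys n_c by (auto simp: distinct_splice_iff)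
    moreover have "\<not> contains_12_34 p"
    proof (rule not_contains_12_34_if_alternating)
      fix i assume "i < length p"
      then have i: "i < length xs + length ys"
        using p by simp
      have "xs ! (i div 2) \<in> {1..c}" if "even i"
        using that i lengths[OF xy] n_c xs(1) nth_mem[of "i div 2" xs] by (auto elim!: evenE)
      moreover have "ys ! (i div 2) \<in> {c+1..n}" if "odd i"
        using that i lengths[OF xy] n_c ys(1) nth_mem[of "i div 2" ys] by (auto elim!: oddE)
      ultimately show "p ! i \<le> c \<longleftrightarrow> even i"
        unfolding p using i lengths[OF xy] n_c by (auto simp: nth_splice)
    qed
    ultimately show "p \<in> {p \<in> perms n. \<not> contains_12_34 p}"
      by blast
  qed
  finally show ?thesis
    using n_c unfolding X_def c_def by (simp add: card_cartesian_product)
qed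

lemma fact_le_two_power_mult_alpha_12_34: "fact n \<le> 2 ^ n * alpha_12_34 n"
proof -
  have "n - n div 2 = (n + 1) div 2"
    by presburger
  then have "fact n = (n choose n div 2) * (fact ((n + 1) div 2) * fact (n div 2))"
    using binomial_fact_lemma[of "n div 2" n] by (simp add: ac_simps)
  also have "\<dots> \<le> 2 ^ n * (fact ((n + 1) div 2) * fact (n div 2))"
    by (rule mult_le_mono1[OF binomial_le_pow2])
  also have "\<dots> \<le> 2 ^ n * alpha_12_34 n"
    using fact_mult_fact_le_alpha_12_34 by simp
  finally show ?thesis .
qed

lemma bell_div_alpha_12_34_le:
  obtains K where "\<And>n. real (bell n) / real (alpha_12_34 n) \<le> K * (1 / 2) ^ n"
proof -
  have "real (bell (Suc n)) \<le> (\<Sum>k\<le>n. (n choose k) * real (bell (n - k)))" for n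
    using of_nat_mono[OF bell_Suc_le[of n], where 'a = real] by (simp only: of_nat_sum of_nat_mult)
  then obtain K where "0 \<le> K" and bell_le: "\<And>n. real (bell n) \<le> K * fact n / 4 ^ n"
    using Bell_recurrence_imp_le_fact_div_power[of 4 "\<lambda>n. real (bell n)"] by auto
  have "real (bell n) / real (alpha_12_34 n) \<le> K * (1 / 2) ^ n" for n
  proof -
    have alpha: "fact n \<le> 2 ^ n * real (alpha_12_34 n)"
      using of_nat_mono[OF fact_le_two_power_mult_alpha_12_34[of n], where 'a = real]
      by (metis of_nat_fact of_nat_mult of_nat_numeral of_nat_power)
    then have "0 < 2 ^ n * real (alpha_12_34 n)"
      using fact_gt_zero[of n, where 'a = real] by linarith
    then have alpha_pos: "0 < real (alpha_12_34 n)"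
      by (simp add: zero_less_mult_iff)
    have four: "(4::real) ^ n = 2 ^ n * 2 ^ n"
      by (simp flip: power_mult_distrib)
    have "real (bell n) \<le> K * fact n / 4 ^ n"
      by (rule bell_le)
    also have "\<dots> \<le> K * (2 ^ n * real (alpha_12_34 n)) / 4 ^ n"
      using alpha \<open>0 \<le> K\<close> by (intro divide_right_mono mult_left_mono) auto
    also have "\<dots> = K * (1 / 2) ^ n * real (alpha_12_34 n)"
      unfolding four by (simp add: power_one_over)
    finally show ?thesis
      using alpha_pos by (simp add: pos_divide_le_eq)
  qed
  then show thesis by (rule that)
qed

theorem mainTheorem6:
  shows "(\<lambda>n. real (bell n) / real (alpha_12_34 n)) \<longlonglongrightarrow> 0"
proof -
  obtain K where ratio_le: "\<And>n. real (bell n) / real (alpha_12_34 n) \<le> K * (1 / 2) ^ n"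
    using bell_div_alpha_12_34_le by blast
  have geometric: "(\<lambda>n. K * (1 / 2 :: real) ^ n) \<longlonglongrightarrow> 0"
    by (intro tendsto_mult_right_zero LIMSEQ_power_zero) auto
  show ?thesis
    by (rule tendsto_sandwich[OF _ _ tendsto_const geometric])
       (simp_all add: ratio_le always_eventually)
qed

end
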